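(* Consider the discrete Motsch–Tadmor model described in the context, under the standing assumptions stated there. Suppose the initial data $(X(0),V(0))$ and the coupling strength $\kappa$ satisfy \[ \|\Delta^x(0)\|_F < M \quad\text{and}\quad \|\Delta^v(0)\|_F < \kappa \int_{\|\Delta^x(0)\|_F}^{M} \psi(s)\,ds , \] and let $(X(n),V(n))_{n\ge 0}$ be the solution of the discrete model with this initial data. Then: (i) $\sup_{0\le n<\infty} \|\Delta^x(n)\|_F \le M$; (ii) for any constant $0<C<1$, for all sufficiently small time-steps $h>0$ one has \[ \|\Delta^v(n)\|_F \le \|\Delta^v(0)\|_F\, e^{-C\kappa\psi(M) n h}\qquad \text{for all } n\ge 0 . \]
   Context: Discrete Motsch–Tadmor (MT) model: fix integers $N\ge1$, $d\ge1$, a coupling strength $\kappa>0$, a time-step $h>0$, and a communication function $a:[0,\infty)\to\mathbb{R}$. Standing assumptions: there are constants $0<c_1\le c_2$ with $c_1\le a(r)\le c_2$ for all $r\ge0$; $a$ is Lipschitz with constant $L_a>0$, i.e. $|a(r_1)-a(r_2)|\le L_a|r_1-r_2|$ for $r_1,r_2\ge0$; and $0<h<\min\{1,1/\kappa\}$. A solution is a sequence $(X(n),V(n))_{n\ge0}$ with $X(n)=(x_1(n),\dots,x_N(n))$, $V(n)=(v_1(n),\dots,v_N(n))\in(\mathbb{R}^d)^N$ satisfying, for $i=1,\dots,N$ and $n\ge0$, $x_i(n+1)=x_i(n)+h v_i(n)$, $v_i(n+1)=v_i(n)+h\kappa\sum_{j=1}^N\phi_{ij}(n)(v_j(n)-v_i(n))$,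 where $\phi_{ij}(n)=\frac{a(\|x_i(n)-x_j(n)\|)}{\sum_{k=1}^N a(\|x_i(n)-x_k(n)\|)}$ and $\|\cdot\|$ is the Euclidean norm. Notation: $\Delta^x_{ij}(n)=x_i(n)-x_j(n)$, $\Delta^v_{ij}(n)=v_i(n)-v_j(n)$, $\|\Delta^x(n)\|_F=(\sum_{i,j=1}^N\|\Delta^x_{ij}(n)\|^2)^{1/2}$, $\|\Delta^v(n)\|_F=(\sum_{i,j=1}^N\|\Delta^v_{ij}(n)\|^2)^{1/2}$. Constants: $\|\phi\|_{\mathrm{Lip}}:=\frac{L_a}{Nc_1}\left(1+\frac{c_2}{c_1}\right)$, $M:=\frac{1}{4N\|\phi\|_{\mathrm{Lip}}}$, and $\psi(s):=1-\|\phi\|_{\mathrm{Lip}}Ns$. *)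

theory Defs
  imports "HOL-Analysis.Analysis"
begin

text \<open>Agents are indexed by i < N; positions and velocities live in real^'d
  (Euclidean norm). A configuration is a map nat => real^'d (only i < N matter).\<close>

definition phi_lip :: "nat \<Rightarrow> real \<Rightarrow> real \<Rightarrow> real \<Rightarrow> real" where
  "phi_lip N c1 c2 La = La / (real N * c1) * (1 + c2 / c1)"

definition M_const :: "nat \<Rightarrow> real \<Rightarrow> real \<Rightarrow> real \<Rightarrow> real" where
  "M_const N c1 c2 La = 1 / (4 * real N * phi_lip N c1 c2 La)"

definition psi :: "nat \<Rightarrow> real \<Rightarrow> real \<Rightarrow> real \<Rightarrow> real \<Rightarrow> real" where
  "psi N c1 c2 La s = 1 - phi_lip N c1 c2 La * real N * s"

definition frob_diff :: "nat \<Rightarrow> (nat \<Rightarrow> real ^ 'd) \<Rightarrow> real" where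
  "frob_diff N Y = sqrt (\<Sum>i<N. \<Sum>j<N. (norm (Y i - Y j))\<^sup>2)"

definition phi_w :: "nat \<Rightarrow> (real \<Rightarrow> real) \<Rightarrow> (nat \<Rightarrow> real ^ 'd) \<Rightarrow> nat \<Rightarrow> nat \<Rightarrow> real" where
  "phi_w N a Xn i j = a (norm (Xn i - Xn j)) / (\<Sum>k<N. a (norm (Xn i - Xn k)))"

definition MT_solution ::
  "nat \<Rightarrow> real \<Rightarrow> real \<Rightarrow> (real \<Rightarrow> real) \<Rightarrow> (nat \<Rightarrow> nat \<Rightarrow> real ^ 'd) \<Rightarrow> (nat \<Rightarrow> nat \<Rightarrow> real ^ 'd) \<Rightarrow> bool" where
  "MT_solution N \<kappa> h a X V \<longleftrightarrow>
     (\<forall>n. \<forall>i<N. X (Suc n) i = X n i + h *\<^sub>R V n i \<and>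
        V (Suc n) i = V n i + (h * \<kappa>) *\<^sub>R (\<Sum>j<N. phi_w N a (X n) i j *\<^sub>R (V n j - V n i)))"

end

theory Submission
  imports Defs
begin

text \<open>With Psi(s) the integral of psi over [0, s], the energy
  |Dv(n)|_F + \<kappa> Psi(|Dx(n)|_F) does not increase along the scheme: one step moves
  |Dx|_F by at most h |Dv|_F, Psi is concave with slope psi, and the Lipschitz bound on the
  weights phi_ij gives |Dv(n+1)|_F \<le> (1 - h \<kappa> psi(|Dx(n)|_F)) |Dv(n)|_F.
  The initial condition says that the energy starts below \<kappa> Psi(M); as Psi increases on
  [0, 2M] and a single step cannot reach 2M, |Dx(n)|_F never exceeds M. Hence
  psi \<ge> psi(M) along the whole trajectory, and |Dv|_F contracts at every step by the factor
  1 - h \<kappa> psi(M) \<le> exp (- h \<kappa> psi(M)).\<close>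

definition frob_norm :: "nat \<Rightarrow> (nat \<Rightarrow> nat \<Rightarrow> real) \<Rightarrow> real" where
  "frob_norm N e = L2_set (\<lambda>(i, j). e i j) ({..<N} \<times> {..<N})"

lemma frob_norm_nonneg: "0 \<le> frob_norm N e"
  unfolding frob_norm_def by simp

lemma frob_norm_squared: "(frob_norm N e)\<^sup>2 = (\<Sum>i<N. \<Sum>j<N. (e i j)\<^sup>2)"
  unfolding frob_norm_def L2_set_def
  by (simp add: sum_nonneg sum.cartesian_product case_prod_unfold)

lemma frob_norm_mono:
  assumes "\<And>i j. i < N \<Longrightarrow> j < N \<Longrightarrow> 0 \<le> e i j \<and> e i j \<le> f i j"
  shows "frob_norm N e \<le> frob_norm N f"
  unfolding frob_norm_def by (rule L2_set_mono) (use assms in auto)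

lemma frob_norm_add_le: "frob_norm N (\<lambda>i j. e i j + f i j) \<le> frob_norm N e + frob_norm N f"
  unfolding frob_norm_def
  using L2_set_triangle_ineq[of "\<lambda>(i, j). e i j" "\<lambda>(i, j). f i j"] by (simp add: case_prod_unfold)

lemma frob_norm_scale: "0 \<le> c \<Longrightarrow> frob_norm N (\<lambda>i j. c * e i j) = c * frob_norm N e"
  unfolding frob_norm_def
  using L2_set_right_distrib[of c "\<lambda>(i, j). e i j"] by (simp add: case_prod_unfold)

lemma column_sum_squared_le_frob_norm:
  assumes "j < N"
  shows "(\<Sum>k<N. e k j)\<^sup>2 \<le> real N * (frob_norm N e)\<^sup>2"
proof -
  have "(\<Sum>k<N. e k j)\<^sup>2 \<le> real N * (\<Sum>k<N. (e k j)\<^sup>2)"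
    using sum_squared_le_sum_of_squares[of "\<lambda>k. e k j" "{..<N}"] by (simp add: mult.commute)
  also have "\<dots> \<le> real N * (\<Sum>k<N. \<Sum>m<N. (e k m)\<^sup>2)"
    using assms by (intro mult_left_mono sum_mono member_le_sum) auto
  finally show ?thesis
    by (simp add: frob_norm_squared)
qed

lemma frob_norm_column_sum_weighted_le:
  "frob_norm N (\<lambda>i j. d i j * (\<Sum>k<N. e k j)) \<le> sqrt (real N) * frob_norm N d * frob_norm N e"
proof (rule power2_le_imp_le)
  have "(\<Sum>i<N. \<Sum>j<N. (d i j * (\<Sum>k<N. e k j))\<^sup>2)
      \<le> (\<Sum>i<N. \<Sum>j<N. (d i j)\<^sup>2 * (real N * (frob_norm N e)\<^sup>2))"
    by (intro sum_mono) (simp add: power_mult_distrib mult_left_mono column_sum_squared_le_frob_norm)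
  also have "\<dots> = (frob_norm N d)\<^sup>2 * (real N * (frob_norm N e)\<^sup>2)"
    unfolding frob_norm_squared[of N d] sum_distrib_right ..
  also have "\<dots> = (sqrt (real N) * frob_norm N d * frob_norm N e)\<^sup>2"
    by (simp add: power_mult_distrib)
  finally show "(frob_norm N (\<lambda>i j. d i j * (\<Sum>k<N. e k j)))\<^sup>2
      \<le> (sqrt (real N) * frob_norm N d * frob_norm N e)\<^sup>2"
    by (simp only: frob_norm_squared)
qed (simp add: frob_norm_nonneg)

lemma frob_diff_eq_frob_norm: "frob_diff N Y = frob_norm N (\<lambda>i j. norm (Y i - Y j))"
  unfolding frob_diff_def frob_norm_def L2_set_def
  by (simp add: sum.cartesian_product case_prod_unfold)

lemma frob_diff_nonneg: "0 \<le> frob_diff N Y"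
  by (simp add: frob_diff_eq_frob_norm frob_norm_nonneg)

lemma frob_diff_cong: "(\<And>i. i < N \<Longrightarrow> Y i = Z i) \<Longrightarrow> frob_diff N Y = frob_diff N Z"
  unfolding frob_diff_def by (intro arg_cong[where f = sqrt] sum.cong) auto

lemma frob_diff_add_scaleR_le:
  fixes Y W :: "nat \<Rightarrow> real ^ 'd"
  assumes "0 \<le> h"
  shows "frob_diff N (\<lambda>i. Y i + h *\<^sub>R W i) \<le> frob_diff N Y + h * frob_diff N W"
proof -
  have "norm (Y i + h *\<^sub>R W i - (Y j + h *\<^sub>R W j)) \<le> norm (Y i - Y j) + h * norm (W i - W j)" for i j
  proof -
    have "norm (Y i + h *\<^sub>R W i - (Y j + h *\<^sub>R W j)) = norm ((Y i - Y j) + h *\<^sub>R (W i - W j))"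
      by (simp add: algebra_simps)
    also have "\<dots> \<le> norm (Y i - Y j) + h * norm (W i - W j)"
      using norm_triangle_ineq[of "Y i - Y j" "h *\<^sub>R (W i - W j)"] assms by simp
    finally show ?thesis .
  qed
  then have "frob_diff N (\<lambda>i. Y i + h *\<^sub>R W i)
      \<le> frob_norm N (\<lambda>i j. norm (Y i - Y j) + h * norm (W i - W j))"
    unfolding frob_diff_eq_frob_norm by (intro frob_norm_mono) auto
  also have "\<dots> \<le> frob_norm N (\<lambda>i j. norm (Y i - Y j)) + frob_norm N (\<lambda>i j. h * norm (W i - W j))"
    by (rule frob_norm_add_le)
  also have "\<dots> = frob_diff N Y + h * frob_diff N W"
    by (simp add: frob_norm_scale assms frob_diff_eq_frob_norm)
  finally show ?thesis .
qed

lemma frob_diff_position_step: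
  assumes "MT_solution N \<kappa> h a X V" "0 \<le> h"
  shows "frob_diff N (X (Suc n)) \<le> frob_diff N (X n) + h * frob_diff N (V n)"
proof -
  have "frob_diff N (X (Suc n)) = frob_diff N (\<lambda>i. X n i + h *\<^sub>R V n i)"
    using assms(1) unfolding MT_solution_def by (intro frob_diff_cong) blast
  with frob_diff_add_scaleR_le[OF assms(2)] show ?thesis by simp
qed

lemma sum_phi_w_eq_1:
  assumes "0 < N" and a_pos: "\<And>r. 0 \<le> r \<Longrightarrow> 0 < a r"
  shows "(\<Sum>k<N. phi_w N a Y i k) = 1"
proof -
  have "0 < (\<Sum>k<N. a (norm (Y i - Y k)))"
    using assms by (intro sum_pos) auto
  then show ?thesis
    unfolding phi_w_def by (simp flip: sum_divide_distrib)
qed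

lemma abs_diff_divide_le:
  fixes a b A B s c \<epsilon> \<delta> :: real
  assumes "0 < s" "s \<le> A" "s \<le> B" "0 \<le> b" "b \<le> c"
    and "\<bar>a - b\<bar> \<le> \<epsilon>" "\<bar>A - B\<bar> \<le> \<delta>"
  shows "\<bar>a / A - b / B\<bar> \<le> \<epsilon> / s + c * \<delta> / s\<^sup>2"
proof -
  have A: "0 < A" and B: "0 < B" using assms by linarith+
  have "a / A - b / B = (a - b) / A + b * (B - A) / (A * B)"
    using A B by (simp add: field_simps)
  also have "\<bar>\<dots>\<bar> \<le> \<bar>(a - b) / A\<bar> + \<bar>b * (B - A) / (A * B)\<bar>"
    by (rule abs_triangle_ineq)
  also have "\<dots> = \<bar>a - b\<bar> / A + b * \<bar>A - B\<bar> / (A * B)"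
    using A B assms(4) by (simp add: abs_mult abs_minus_commute)
  also have "\<dots> \<le> \<epsilon> / s + c * \<delta> / s\<^sup>2"
  proof (rule add_mono)
    show "\<bar>a - b\<bar> / A \<le> \<epsilon> / s"
      using assms by (intro frac_le) auto
    show "b * \<bar>A - B\<bar> / (A * B) \<le> c * \<delta> / s\<^sup>2"
      unfolding power2_eq_square using assms by (intro frac_le mult_mono) auto
  qed
  finally show ?thesis .
qed

lemma consensus_step_pair_diff:
  fixes v w :: "nat \<Rightarrow> 'a::real_vector" and \<phi> :: "nat \<Rightarrow> nat \<Rightarrow> real"
  assumes w: "\<And>i. i < N \<Longrightarrow> w i = v i + t *\<^sub>R (\<Sum>k<N. \<phi> i k *\<^sub>R (v k - v i))"
    and sum_one: "\<And>i. i < N \<Longrightarrow> (\<Sum>k<N. \<phi> i k) = 1"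
    and "i < N" "j < N"
  shows "w i - w j = (1 - t) *\<^sub>R (v i - v j) + t *\<^sub>R (\<Sum>k<N. (\<phi> i k - \<phi> j k) *\<^sub>R (v k - v j))"
proof -
  define A where "A = (\<Sum>k<N. \<phi> i k *\<^sub>R (v k - v j))"
  define B where "B = (\<Sum>k<N. \<phi> j k *\<^sub>R (v k - v j))"
  have "(\<Sum>k<N. \<phi> i k *\<^sub>R (v k - v i)) = A - (\<Sum>k<N. \<phi> i k) *\<^sub>R (v i - v j)"
    unfolding A_def by (simp add: scaleR_sum_left algebra_simps flip: sum_subtractf)
  then have wi: "w i = v i + t *\<^sub>R (A - (v i - v j))"
    using w sum_one \<open>i < N\<close> by simp
  have wj: "w j = v j + t *\<^sub>R B"
    using w \<open>j < N\<close> unfolding B_def by simp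
  have diff: "(\<Sum>k<N. (\<phi> i k - \<phi> j k) *\<^sub>R (v k - v j)) = A - B"
    unfolding A_def B_def by (simp add: scaleR_diff_left sum_subtractf)
  show ?thesis
    unfolding wi wj diff by (simp add: algebra_simps)
qed

lemma norm_consensus_step_pair_diff_le:
  fixes v w :: "nat \<Rightarrow> 'a::real_normed_vector" and \<phi> :: "nat \<Rightarrow> nat \<Rightarrow> real"
  assumes w: "\<And>i. i < N \<Longrightarrow> w i = v i + t *\<^sub>R (\<Sum>k<N. \<phi> i k *\<^sub>R (v k - v i))"
    and sum_one: "\<And>i. i < N \<Longrightarrow> (\<Sum>k<N. \<phi> i k) = 1"
    and \<phi>_diff: "\<And>k. k < N \<Longrightarrow> \<bar>\<phi> i k - \<phi> j k\<bar> \<le> \<delta>"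
    and "0 \<le> t" "t \<le> 1" "i < N" "j < N"
  shows "norm (w i - w j) \<le> (1 - t) * norm (v i - v j) + t * (\<delta> * (\<Sum>k<N. norm (v k - v j)))"
proof -
  have "norm (\<Sum>k<N. (\<phi> i k - \<phi> j k) *\<^sub>R (v k - v j)) \<le> (\<Sum>k<N. \<bar>\<phi> i k - \<phi> j k\<bar> * norm (v k - v j))"
    using norm_sum[of "\<lambda>k. (\<phi> i k - \<phi> j k) *\<^sub>R (v k - v j)" "{..<N}"] by simp
  also have "\<dots> \<le> \<delta> * (\<Sum>k<N. norm (v k - v j))"
    unfolding sum_distrib_left by (intro sum_mono mult_right_mono) (auto simp: \<phi>_diff)
  finally have coupling: "norm (\<Sum>k<N. (\<phi> i k - \<phi> j k) *\<^sub>R (v k - v j)) \<le> \<delta> * (\<Sum>k<N. norm (v k - v j))" .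
  have "norm (w i - w j)
      = norm ((1 - t) *\<^sub>R (v i - v j) + t *\<^sub>R (\<Sum>k<N. (\<phi> i k - \<phi> j k) *\<^sub>R (v k - v j)))"
    using consensus_step_pair_diff[OF w sum_one \<open>i < N\<close> \<open>j < N\<close>] by (simp only:)
  also have "\<dots>
      \<le> norm ((1 - t) *\<^sub>R (v i - v j)) + norm (t *\<^sub>R (\<Sum>k<N. (\<phi> i k - \<phi> j k) *\<^sub>R (v k - v j)))"
    by (rule norm_triangle_ineq)
  also have "\<dots> \<le> (1 - t) * norm (v i - v j) + t * (\<delta> * (\<Sum>k<N. norm (v k - v j)))"
    using \<open>0 \<le> t\<close> \<open>t \<le> 1\<close> coupling by (simp add: mult_left_mono)
  finally show ?thesis .
qed

text \<open>The paper's Psi is psi_primitive (phi_lip N c1 c2 La * N), see integral_psi.\<close>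

definition psi_primitive :: "real \<Rightarrow> real \<Rightarrow> real" where
  "psi_primitive q s = s - q * s\<^sup>2 / 2"

lemma integral_psi:
  assumes "r \<le> s"
  shows "integral {r..s} (psi N c1 c2 La)
    = psi_primitive (phi_lip N c1 c2 La * real N) s - psi_primitive (phi_lip N c1 c2 La * real N) r"
proof -
  have "(psi_primitive (phi_lip N c1 c2 La * real N) has_real_derivative psi N c1 c2 La x) (at x within {r..s})" for x
    unfolding psi_primitive_def psi_def
    by (auto intro!: derivative_eq_intros simp: power2_eq_square)
  then have "(psi N c1 c2 La has_integral
      psi_primitive (phi_lip N c1 c2 La * real N) s - psi_primitive (phi_lip N c1 c2 La * real N) r) {r..s}"
    by (intro fundamental_theorem_of_calculus[OF assms])
      (simp add: has_real_derivative_iff_has_vector_derivative)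
  then show ?thesis
    by (rule integral_unique)
qed

lemma psi_primitive_nonneg:
  assumes "0 \<le> s" "q * s \<le> 2"
  shows "0 \<le> psi_primitive q s"
proof -
  have "psi_primitive q s = s * (1 - q * s / 2)"
    unfolding psi_primitive_def by (simp add: algebra_simps power2_eq_square)
  with assms show ?thesis by simp
qed

lemma psi_primitive_le_tangent:
  "0 \<le> q \<Longrightarrow> psi_primitive q y \<le> psi_primitive q x + (1 - q * x) * (y - x)"
proof -
  assume "0 \<le> q"
  have "psi_primitive q y = psi_primitive q x + (1 - q * x) * (y - x) - q / 2 * (y - x)\<^sup>2"
    unfolding psi_primitive_def by (simp add: algebra_simps power2_eq_square)
  with \<open>0 \<le> q\<close> show ?thesis by simp
qed

lemma psi_primitive_le_imp_le:
  assumes "psi_primitive q s \<le> psi_primitive q r" "q * (s + r) < 2"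
  shows "s \<le> r"
proof (rule ccontr)
  assume "\<not> s \<le> r"
  then have "0 < (s - r) * (1 - q * (s + r) / 2)"
    using assms(2) by simp
  also have "\<dots> = psi_primitive q s - psi_primitive q r"
    unfolding psi_primitive_def by (simp add: field_simps power2_eq_square)
  finally show False
    using assms(1) by simp
qed

lemma lyapunov_step:
  assumes "0 \<le> q" "0 \<le> \<kappa>" "q * x \<le> 1" "0 \<le> v"
    and "x' \<le> x + h * v" "v' \<le> (1 - h * \<kappa> * (1 - q * x)) * v"
  shows "v' + \<kappa> * psi_primitive q x' \<le> v + \<kappa> * psi_primitive q x"
proof -
  have "psi_primitive q x' \<le> psi_primitive q x + (1 - q * x) * (x' - x)"
    using assms(1) by (rule psi_primitive_le_tangent)
  also have "\<dots> \<le> psi_primitive q x + (1 - q * x) * (h * v)"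
    using assms by (intro add_left_mono mult_left_mono) auto
  finally have "\<kappa> * psi_primitive q x' \<le> \<kappa> * (psi_primitive q x + (1 - q * x) * (h * v))"
    using assms(2) by (rule mult_left_mono)
  with assms(6) show ?thesis
    by (simp add: algebra_simps)
qed

lemma lyapunov_invariant_step:
  assumes "0 < q" "4 * q * M = 1" "0 < \<kappa>" "0 \<le> h" "h * \<kappa> \<le> 1"
    and "0 \<le> x" "x \<le> M" "0 \<le> v" "0 \<le> v'"
    and x_step: "x' \<le> x + h * v" and v_step: "v' \<le> (1 - h * \<kappa> * (1 - q * x)) * v"
    and lyap: "v + \<kappa> * psi_primitive q x \<le> L" and L: "L < \<kappa> * psi_primitive q M"
  shows "x' \<le> M \<and> v' + \<kappa> * psi_primitive q x' \<le> L"
proof -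
  have "psi_primitive q M = 7 / 8 * M"
    using \<open>4 * q * M = 1\<close> unfolding psi_primitive_def by (simp add: power2_eq_square algebra_simps)
  moreover have "0 < M"
    using assms(1,2) zero_less_mult_iff[of "4 * q" M] by simp
  ultimately have PsiM: "0 \<le> psi_primitive q M" "psi_primitive q M \<le> 7 / 8 * M"
    by simp_all
  have "q * x \<le> q * M"
    using \<open>x \<le> M\<close> assms(1) by (simp add: mult_left_mono)
  then have qx: "q * x \<le> 1 / 4"
    using assms(2) by linarith
  have "v' + \<kappa> * psi_primitive q x' \<le> v + \<kappa> * psi_primitive q x"
    using qx assms(1,3) \<open>0 \<le> v\<close> x_step v_step by (intro lyapunov_step) auto
  with lyap have lyap': "v' + \<kappa> * psi_primitive q x' \<le> L"
    by linarith
  txt \<open>One step moves x by at most h v < Psi(M) \<le> 7M/8, so x' stays where Psi increases.\<close>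
  have "0 \<le> psi_primitive q x"
    using qx \<open>0 \<le> x\<close> by (intro psi_primitive_nonneg) auto
  then have "v < \<kappa> * psi_primitive q M"
    using lyap L \<open>0 < \<kappa>\<close> by (smt (verit) mult_nonneg_nonneg)
  then have "h * v \<le> h * \<kappa> * psi_primitive q M"
    using \<open>0 \<le> h\<close> by (simp add: mult_left_mono mult.assoc)
  also have "\<dots> \<le> psi_primitive q M"
    using mult_right_mono[OF \<open>h * \<kappa> \<le> 1\<close> PsiM(1)] by simp
  finally have "x' + M \<le> 23 / 8 * M"
    using x_step \<open>x \<le> M\<close> PsiM(2) by simp
  then have "q * (x' + M) \<le> q * (23 / 8 * M)"
    using assms(1) by (simp add: mult_left_mono)
  then have "q * (x' + M) < 2"
    using assms(2) by linarith
  moreover have "\<kappa> * psi_primitive q x' \<le> \<kappa> * psi_primitive q M"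
    using lyap' L \<open>0 \<le> v'\<close> by linarith
  then have "psi_primitive q x' \<le> psi_primitive q M"
    using \<open>0 < \<kappa>\<close> by simp
  ultimately show ?thesis
    using psi_primitive_le_imp_le lyap' by blast
qed

lemma lyapunov_bound:
  fixes x v :: "nat \<Rightarrow> real"
  assumes "0 < q" "4 * q * M = 1" "0 < \<kappa>" "0 \<le> h" "h * \<kappa> \<le> 1"
    and x_nonneg: "\<And>n. 0 \<le> x n" and v_nonneg: "\<And>n. 0 \<le> v n"
    and x_step: "\<And>n. x (Suc n) \<le> x n + h * v n"
    and v_step: "\<And>n. v (Suc n) \<le> (1 - h * \<kappa> * (1 - q * x n)) * v n"
    and "x 0 \<le> M" and init: "v 0 + \<kappa> * psi_primitive q (x 0) < \<kappa> * psi_primitive q M"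
  shows "x n \<le> M"
proof -
  have "x n \<le> M \<and> v n + \<kappa> * psi_primitive q (x n) \<le> v 0 + \<kappa> * psi_primitive q (x 0)"
  proof (induction n)
    case 0
    then show ?case using \<open>x 0 \<le> M\<close> by simp
  next
    case (Suc n)
    then show ?case
      using assms(1-5) x_nonneg v_nonneg x_step v_step init
      by (intro lyapunov_invariant_step[where x = "x n" and v = "v n"]) auto
  qed
  then show ?thesis ..
qed

lemma le_exp_decay:
  fixes d :: "nat \<Rightarrow> real"
  assumes "\<epsilon> \<le> 1" "0 \<le> d 0" "\<And>n. d (Suc n) \<le> (1 - \<epsilon>) * d n"
  shows "d n \<le> d 0 * exp (- \<epsilon> * real n)"
proof (induction n)
  case (Suc n)
  have "d (Suc n) \<le> (1 - \<epsilon>) * (d 0 * exp (- \<epsilon> * real n))"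
    using assms(1,3) Suc by (smt (verit) mult_left_mono)
  also have "\<dots> \<le> exp (- \<epsilon>) * (d 0 * exp (- \<epsilon> * real n))"
    using assms(2) exp_ge_add_one_self[of "- \<epsilon>"] by (intro mult_right_mono) auto
  also have "\<dots> = d 0 * exp (- \<epsilon> * real (Suc n))"
    by (simp add: algebra_simps flip: exp_add)
  finally show ?case .
qed simp

locale MT_communication =
  fixes N :: nat and c1 c2 La :: real and a :: "real \<Rightarrow> real"
  assumes N_pos: "0 < N" and c1_pos: "0 < c1" and La_pos: "0 < La"
    and a_bounds: "\<And>r. 0 \<le> r \<Longrightarrow> c1 \<le> a r \<and> a r \<le> c2"
    and a_lipschitz: "\<And>r1 r2. 0 \<le> r1 \<Longrightarrow> 0 \<le> r2 \<Longrightarrow> \<bar>a r1 - a r2\<bar> \<le> La * \<bar>r1 - r2\<bar>"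
begin

lemma phi_lip_pos: "0 < phi_lip N c1 c2 La"
proof -
  have "c1 \<le> c2"
    using a_bounds[of 0] by simp
  then show ?thesis
    using N_pos c1_pos La_pos unfolding phi_lip_def by (simp add: add_pos_nonneg)
qed

lemma M_const_eq: "4 * (phi_lip N c1 c2 La * real N) * M_const N c1 c2 La = 1"
  using phi_lip_pos N_pos unfolding M_const_def by simp

lemma psi_M_const: "psi N c1 c2 La (M_const N c1 c2 La) = 3 / 4"
  using M_const_eq unfolding psi_def by (simp add: algebra_simps)

lemma a_pos: "0 \<le> r \<Longrightarrow> 0 < a r"
  using a_bounds[of r] c1_pos by simp

lemma phi_w_lipschitz:
  fixes Y :: "nat \<Rightarrow> real ^ 'd"
  shows "\<bar>phi_w N a Y i k - phi_w N a Y j k\<bar> \<le> phi_lip N c1 c2 La * norm (Y i - Y j)"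
proof -
  define S where "S l = (\<Sum>m<N. a (norm (Y l - Y m)))" for l
  have a_diff: "\<bar>a (norm (Y i - Y m)) - a (norm (Y j - Y m))\<bar> \<le> La * norm (Y i - Y j)" for m
  proof -
    have "\<bar>a (norm (Y i - Y m)) - a (norm (Y j - Y m))\<bar> \<le> La * \<bar>norm (Y i - Y m) - norm (Y j - Y m)\<bar>"
      by (rule a_lipschitz) auto
    also have "\<dots> \<le> La * norm (Y i - Y j)"
      using norm_triangle_ineq3[of "Y i - Y m" "Y j - Y m"] La_pos
      by (intro mult_left_mono) auto
    finally show ?thesis .
  qed
  have S_ge: "real N * c1 \<le> S l" for l
    using sum_mono[of "{..<N}" "\<lambda>_. c1" "\<lambda>m. a (norm (Y l - Y m))"] a_bounds
    unfolding S_def by auto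
  have "\<bar>S i - S j\<bar> \<le> (\<Sum>m<N. \<bar>a (norm (Y i - Y m)) - a (norm (Y j - Y m))\<bar>)"
    unfolding S_def by (simp flip: sum_subtractf add: sum_abs)
  also have "\<dots> \<le> real N * (La * norm (Y i - Y j))"
    using sum_mono[of "{..<N}", OF a_diff] by simp
  finally have S_diff: "\<bar>S i - S j\<bar> \<le> real N * (La * norm (Y i - Y j))" .
  have "\<bar>a (norm (Y i - Y k)) / S i - a (norm (Y j - Y k)) / S j\<bar>
      \<le> La * norm (Y i - Y j) / (real N * c1) + c2 * (real N * (La * norm (Y i - Y j))) / (real N * c1)\<^sup>2"
  proof (rule abs_diff_divide_le[OF _ S_ge S_ge _ _ a_diff S_diff])
    show "0 < real N * c1" using N_pos c1_pos by simp
    show "0 \<le> a (norm (Y j - Y k))" "a (norm (Y j - Y k)) \<le> c2"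
      using a_bounds[of "norm (Y j - Y k)"] c1_pos by auto
  qed
  also have "\<dots> = phi_lip N c1 c2 La * norm (Y i - Y j)"
    using N_pos c1_pos unfolding phi_lip_def by (simp add: field_simps power2_eq_square)
  finally show ?thesis
    unfolding phi_w_def S_def .
qed

lemma frob_diff_velocity_step:
  fixes X V :: "nat \<Rightarrow> nat \<Rightarrow> real ^ 'd"
  assumes sol: "MT_solution N \<kappa> h a X V"
    and t: "0 \<le> h * \<kappa>" "h * \<kappa> \<le> 1"
  shows "frob_diff N (V (Suc n)) \<le> (1 - h * \<kappa> * psi N c1 c2 La (frob_diff N (X n))) * frob_diff N (V n)"
proof -
  define p where "p = phi_lip N c1 c2 La"
  define e where "e i j = norm (V n i - V n j)" for i j
  define d where "d i j = norm (X n i - X n j)" for i j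
  have p: "0 \<le> p" unfolding p_def using phi_lip_pos by simp
  have update: "\<And>i. i < N \<Longrightarrow>
      V (Suc n) i = V n i + (h * \<kappa>) *\<^sub>R (\<Sum>k<N. phi_w N a (X n) i k *\<^sub>R (V n k - V n i))"
    using sol unfolding MT_solution_def by blast
  have pair: "norm (V (Suc n) i - V (Suc n) j) \<le> (1 - h * \<kappa>) * e i j + h * \<kappa> * p * (d i j * (\<Sum>k<N. e k j))"
    if "i < N" "j < N" for i j
  proof -
    have "\<bar>phi_w N a (X n) i k - phi_w N a (X n) j k\<bar> \<le> p * d i j" if "k < N" for k
      unfolding p_def d_def by (rule phi_w_lipschitz)
    from norm_consensus_step_pair_diff_le[OF update sum_phi_w_eq_1[OF N_pos a_pos] this t \<open>i < N\<close> \<open>j < N\<close>]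
    show ?thesis
      unfolding e_def by (simp add: mult_ac)
  qed
  have "frob_diff N (V (Suc n))
      \<le> frob_norm N (\<lambda>i j. (1 - h * \<kappa>) * e i j + h * \<kappa> * p * (d i j * (\<Sum>k<N. e k j)))"
    unfolding frob_diff_eq_frob_norm by (intro frob_norm_mono) (simp add: pair)
  also have "\<dots> \<le> frob_norm N (\<lambda>i j. (1 - h * \<kappa>) * e i j)
      + frob_norm N (\<lambda>i j. h * \<kappa> * p * (d i j * (\<Sum>k<N. e k j)))"
    by (rule frob_norm_add_le)
  also have "\<dots> = (1 - h * \<kappa>) * frob_norm N e + h * \<kappa> * p * frob_norm N (\<lambda>i j. d i j * (\<Sum>k<N. e k j))"
    using t p by (simp add: frob_norm_scale)
  also have "\<dots> \<le> (1 - h * \<kappa>) * frob_norm N e + h * \<kappa> * p * (real N * frob_norm N d * frob_norm N e)"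
  proof -
    txt \<open>The constant psi of the paper uses N where Cauchy-Schwarz gives sqrt N.\<close>
    have "sqrt (real N) \<le> real N"
      using N_pos by (intro real_le_lsqrt) (simp_all add: power2_eq_square)
    then have "frob_norm N (\<lambda>i j. d i j * (\<Sum>k<N. e k j)) \<le> real N * frob_norm N d * frob_norm N e"
      using frob_norm_column_sum_weighted_le[of N d e] frob_norm_nonneg[of N d] frob_norm_nonneg[of N e]
      by (smt (verit) mult_nonneg_nonneg mult_right_mono)
    then show ?thesis
      using t p by (simp add: mult_left_mono)
  qed
  also have "\<dots> = (1 - h * \<kappa> * psi N c1 c2 La (frob_diff N (X n))) * frob_diff N (V n)"
    unfolding psi_def frob_diff_eq_frob_norm p_def e_def d_def by (simp add: algebra_simps)
  finally show ?thesis .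
qed

lemma MT_solution_diameter_le:
  fixes X V :: "nat \<Rightarrow> nat \<Rightarrow> real ^ 'd"
  assumes sol: "MT_solution N \<kappa> h a X V"
    and "0 < \<kappa>" "0 \<le> h" "h * \<kappa> \<le> 1"
    and init_x: "frob_diff N (X 0) < M_const N c1 c2 La"
    and init_v: "frob_diff N (V 0) < \<kappa> * integral {frob_diff N (X 0)..M_const N c1 c2 La} (psi N c1 c2 La)"
  shows "frob_diff N (X n) \<le> M_const N c1 c2 La"
proof (rule lyapunov_bound[where v = "\<lambda>n. frob_diff N (V n)"])
  define q where "q = phi_lip N c1 c2 La * real N"
  show "0 < q"
    unfolding q_def using phi_lip_pos N_pos by simp
  show "4 * q * M_const N c1 c2 La = 1"
    unfolding q_def by (rule M_const_eq)
  show "frob_diff N (V (Suc m)) \<le> (1 - h * \<kappa> * (1 - q * frob_diff N (X m))) * frob_diff N (V m)" for m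
    using frob_diff_velocity_step[OF sol] assms(2-4) unfolding psi_def q_def by (simp add: mult_ac)
  show "frob_diff N (V 0) + \<kappa> * psi_primitive q (frob_diff N (X 0))
      < \<kappa> * psi_primitive q (M_const N c1 c2 La)"
    using init_v init_x integral_psi[of "frob_diff N (X 0)" "M_const N c1 c2 La" N c1 c2 La]
    unfolding q_def by (simp add: algebra_simps)
qed (use assms frob_diff_nonneg frob_diff_position_step in auto)

lemma MT_solution_velocity_decay:
  fixes X V :: "nat \<Rightarrow> nat \<Rightarrow> real ^ 'd"
  assumes sol: "MT_solution N \<kappa> h a X V"
    and "0 < \<kappa>" "0 \<le> h" "h * \<kappa> \<le> 1"
    and diameter: "\<And>n. frob_diff N (X n) \<le> M_const N c1 c2 La"
  shows "frob_diff N (V n)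
    \<le> frob_diff N (V 0) * exp (- \<kappa> * psi N c1 c2 La (M_const N c1 c2 La) * real n * h)"
proof -
  have "frob_diff N (V n)
      \<le> frob_diff N (V 0) * exp (- (h * \<kappa> * psi N c1 c2 La (M_const N c1 c2 La)) * real n)"
  proof (rule le_exp_decay)
    show "h * \<kappa> * psi N c1 c2 La (M_const N c1 c2 La) \<le> 1"
      using \<open>h * \<kappa> \<le> 1\<close> by (simp add: psi_M_const)
    show "frob_diff N (V (Suc m))
        \<le> (1 - h * \<kappa> * psi N c1 c2 La (M_const N c1 c2 La)) * frob_diff N (V m)" for m
    proof -
      have "psi N c1 c2 La (M_const N c1 c2 La) \<le> psi N c1 c2 La (frob_diff N (X m))"
        using diameter[of m] phi_lip_pos unfolding psi_def by (simp add: mult_left_mono)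
      then have "h * \<kappa> * psi N c1 c2 La (M_const N c1 c2 La) \<le> h * \<kappa> * psi N c1 c2 La (frob_diff N (X m))"
        using assms(2,3) by (simp add: mult_left_mono)
      then show ?thesis
        using frob_diff_velocity_step[OF sol] assms(2-4) frob_diff_nonneg[of N "V m"]
        by (smt (verit) mult_right_mono mult_nonneg_nonneg)
    qed
  qed (rule frob_diff_nonneg)
  then show ?thesis
    by (simp add: mult_ac)
qed

end

theorem theorem3p4:
  fixes N :: nat and \<kappa> c1 c2 La :: real and a :: "real \<Rightarrow> real"
    and x0 v0 :: "nat \<Rightarrow> real ^ 'd"
  assumes N: "N \<ge> 1"
    and kappa: "\<kappa> > 0"
    and c: "0 < c1" "c1 \<le> c2"
    and a_bd: "\<And>r. r \<ge> 0 \<Longrightarrow> c1 \<le> a r \<and> a r \<le> c2"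
    and La: "La > 0"
    and a_lip: "\<And>r1 r2. r1 \<ge> 0 \<Longrightarrow> r2 \<ge> 0 \<Longrightarrow> \<bar>a r1 - a r2\<bar> \<le> La * \<bar>r1 - r2\<bar>"
    and init_x: "frob_diff N x0 < M_const N c1 c2 La"
    and init_v: "frob_diff N v0 < \<kappa> * integral {frob_diff N x0 .. M_const N c1 c2 La} (psi N c1 c2 La)"
  shows "(\<forall>h X V. 0 < h \<and> h < min 1 (1 / \<kappa>) \<and> MT_solution N \<kappa> h a X V
            \<and> (\<forall>i<N. X 0 i = x0 i \<and> V 0 i = v0 i)
            \<longrightarrow> (\<forall>n. frob_diff N (X n) \<le> M_const N c1 c2 La))
       \<and> (\<forall>C. 0 < C \<and> C < 1 \<longrightarrow>
           (\<exists>h0 > 0. \<forall>h X V. 0 < h \<and> h < h0 \<and> h < min 1 (1 / \<kappa>) \<and> MT_solution N \<kappa> h a X V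
               \<and> (\<forall>i<N. X 0 i = x0 i \<and> V 0 i = v0 i)
               \<longrightarrow> (\<forall>n. frob_diff N (V n) \<le> frob_diff N v0 *
                     exp (- C * \<kappa> * psi N c1 c2 La (M_const N c1 c2 La) * real n * h))))"
proof -
  interpret MT_communication N c1 c2 La a
    using N c(1) La a_bd a_lip by unfold_locales auto
  have bounds: "frob_diff N (X n) \<le> M_const N c1 c2 La \<and>
      frob_diff N (V n) \<le> frob_diff N v0 * exp (- \<kappa> * psi N c1 c2 La (M_const N c1 c2 La) * real n * h)"
    if "0 < h \<and> h < min 1 (1 / \<kappa>) \<and> MT_solution N \<kappa> h a X V \<and> (\<forall>i<N. X 0 i = x0 i \<and> V 0 i = v0 i)"
    for h and X V :: "nat \<Rightarrow> nat \<Rightarrow> real ^ 'd" and n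
  proof -
    from that have sol: "MT_solution N \<kappa> h a X V" and "0 \<le> h" and "h * \<kappa> \<le> 1"
      using kappa by (auto simp: field_simps)
    have X0: "frob_diff N (X 0) = frob_diff N x0" and V0: "frob_diff N (V 0) = frob_diff N v0"
      using that by (auto intro: frob_diff_cong)
    have diameter: "frob_diff N (X m) \<le> M_const N c1 c2 La" for m
      by (rule MT_solution_diameter_le[OF sol kappa \<open>0 \<le> h\<close> \<open>h * \<kappa> \<le> 1\<close>])
        (use X0 V0 init_x init_v in simp_all)
    show ?thesis
      using diameter MT_solution_velocity_decay[OF sol kappa \<open>0 \<le> h\<close> \<open>h * \<kappa> \<le> 1\<close> diameter] V0
      by simp
  qed
  have rate_mono: "exp (- \<kappa> * psi N c1 c2 La (M_const N c1 c2 La) * real n * h)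
      \<le> exp (- C * \<kappa> * psi N c1 c2 La (M_const N c1 c2 La) * real n * h)"
    if "0 < C" "C < 1" "0 < h" for C h :: real and n
    using that kappa mult_left_le_one_le[of "\<kappa> * (3 / 4) * real n * h" C]
    by (simp add: psi_M_const mult_ac)
  show ?thesis
  proof (intro conjI allI impI)
    fix C :: real
    assume "0 < C \<and> C < 1"
    then have "frob_diff N (V n)
        \<le> frob_diff N v0 * exp (- C * \<kappa> * psi N c1 c2 La (M_const N c1 c2 La) * real n * h)"
      if "0 < h \<and> h < min 1 (1 / \<kappa>) \<and> MT_solution N \<kappa> h a X V \<and> (\<forall>i<N. X 0 i = x0 i \<and> V 0 i = v0 i)"
      for h X V n
      using bounds[OF that] rate_mono that frob_diff_nonneg[of N v0] by (meson mult_left_mono order_trans)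
    \<comment> \<open>The standing bound h < 1/\<kappa> is already small enough, so any h0 works.\<close>
    then show "\<exists>h0>0. \<forall>h X V. 0 < h \<and> h < h0 \<and> h < min 1 (1 / \<kappa>) \<and> MT_solution N \<kappa> h a X V
        \<and> (\<forall>i<N. X 0 i = x0 i \<and> V 0 i = v0 i)
        \<longrightarrow> (\<forall>n. frob_diff N (V n) \<le> frob_diff N v0 *
              exp (- C * \<kappa> * psi N c1 c2 La (M_const N c1 c2 La) * real n * h))"
      by (intro exI[of _ "1 :: real"] conjI zero_less_one) blast
  qed (use bounds in blast)
qed

end
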